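(* Let $L\subseteq\bigwedge^{k}V$ be a subspace such that $e_{1}\wedge e_{2}\wedge x=0$ for all $x\in L$. Then for every $3\leq i<j\leq n$, also $e_{1}\wedge e_{2}\wedge y=0$ for all $y\in N_{j\to i}L$.
   Context: $\mathbb{F}$ is a field (assumed throughout the paper, for expository purposes, to have characteristic not $2$), $V$ is an $n$-dimensional $\mathbb{F}$-vector space with a fixed basis $e_1,\dots,e_n$, and $\bigwedge V$ its exterior algebra. For $j\in[n]$, $V^{(j)}$ is the span of $\{e_h:h\neq j\}$. Slow shift: for distinct $i,j\in[n]$ and nonzero $m\in\bigwedge^kV$, write uniquely $m=x+e_j\wedge y$ with $x\in\bigwedge^kV^{(j)}$, $y\in\bigwedge^{k-1}V^{(j)}$, and set $N_{j\to i}m=x+e_i\wedge y$ if this is nonzero, and $N_{j\to i}m=e_j\wedge y$ otherwise (the limit as $t\to0$ of the projective action of the linear map $e_j\mapsto e_i+te_j$ fixing the other $e_h$). For a subspace $L$ of $\bigwedge^kV$, $N_{j\to i}L$ is the span of $\{N_{j\to i}m:m\in L\setminus\{0\}\}$. *)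

theory Defs
  imports Main
begin

text \<open>Concrete model of the exterior algebra of V = F^n with fixed basis e_1,...,e_n.
  An element of the exterior algebra is a coefficient function on finite index sets:
  f S is the coefficient of e_S = e_{s1} wedge ... wedge e_{sr} (s1 < ... < sr).\<close>

type_synonym 'a ext = "nat set \<Rightarrow> 'a"

text \<open>Elements of the k-th exterior power of the span of {e_h : h in I}.\<close>
definition ext_pow :: "nat \<Rightarrow> nat set \<Rightarrow> ('a::field) ext set" where
  "ext_pow k I = {f. \<forall>S. f S \<noteq> 0 \<longrightarrow> S \<subseteq> I \<and> card S = k}"

definition ext_zero :: "('a::field) ext" where
  "ext_zero = (\<lambda>S. 0)"

definition ext_add :: "('a::field) ext \<Rightarrow> 'a ext \<Rightarrow> 'a ext" where
  "ext_add f g = (\<lambda>S. f S + g S)"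

definition ext_smult :: "'a::field \<Rightarrow> 'a ext \<Rightarrow> 'a ext" where
  "ext_smult c f = (\<lambda>S. c * f S)"

definition basis_e :: "nat \<Rightarrow> ('a::field) ext" where
  "basis_e i = (\<lambda>S. if S = {i} then 1 else 0)"

text \<open>Sign of e_A wedge e_B relative to e_{A union B}: (-1)^(number of inversions).\<close>
definition wsign :: "nat set \<Rightarrow> nat set \<Rightarrow> 'a::field" where
  "wsign A B = (-1) ^ card {(a, b). a \<in> A \<and> b \<in> B \<and> b < a}"

definition wedge :: "('a::field) ext \<Rightarrow> 'a ext \<Rightarrow> 'a ext" where
  "wedge f g = (\<lambda>S. \<Sum>A \<in> Pow S. wsign A (S - A) * f A * g (S - A))"

definition lspan :: "('a::field) ext set \<Rightarrow> 'a ext set" where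
  "lspan X = {v. \<exists>F c. finite F \<and> F \<subseteq> X \<and> v = (\<lambda>S. \<Sum>u\<in>F. c u * u S)}"

definition is_subspace :: "nat \<Rightarrow> nat \<Rightarrow> ('a::field) ext set \<Rightarrow> bool" where
  "is_subspace n k L \<longleftrightarrow> L \<subseteq> ext_pow k {1..n} \<and> ext_zero \<in> L \<and>
     (\<forall>x\<in>L. \<forall>y\<in>L. ext_add x y \<in> L) \<and> (\<forall>c. \<forall>x\<in>L. ext_smult c x \<in> L)"

definition decomp :: "nat \<Rightarrow> nat \<Rightarrow> nat \<Rightarrow> ('a::field) ext \<Rightarrow> 'a ext \<times> 'a ext" where
  "decomp n k j m = (THE p. fst p \<in> ext_pow k ({1..n} - {j}) \<and>
                            snd p \<in> ext_pow (k - 1) ({1..n} - {j}) \<and>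
                            m = ext_add (fst p) (wedge (basis_e j) (snd p)))"

definition slow_shift :: "nat \<Rightarrow> nat \<Rightarrow> nat \<Rightarrow> nat \<Rightarrow> ('a::field) ext \<Rightarrow> 'a ext" where
  "slow_shift n k j i m = (case decomp n k j m of (x, y) \<Rightarrow>
      (if ext_add x (wedge (basis_e i) y) \<noteq> ext_zero
       then ext_add x (wedge (basis_e i) y)
       else wedge (basis_e j) y))"

definition slow_shift_space :: "nat \<Rightarrow> nat \<Rightarrow> nat \<Rightarrow> nat \<Rightarrow> ('a::field) ext set \<Rightarrow> 'a ext set" where
  "slow_shift_space n k j i L = lspan (slow_shift n k j i ` (L - {ext_zero}))"

end

theory Submission
  imports Defs
begin

text \<open>Wedging with a monomial e_D kills exactly the monomials e_T with T meeting D and is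
  injective on the span of the others, so e_1 \<and> e_2 \<and> x = 0 means that every monomial
  occurring in x contains e_1 or e_2. This condition is checked coefficient by coefficient: it
  passes to both components x, y of m = x + e_j \<and> y, whose coefficients are coefficients of m
  up to sign; it survives wedging with e_i or e_j because i, j \<notin> {1, 2}; and it is kept by
  linear combinations.\<close>

definition ext_monomial :: "nat set \<Rightarrow> 'a::field \<Rightarrow> 'a ext" where
  "ext_monomial D c = (\<lambda>A. if A = D then c else 0)"

definition support_meets :: "nat set \<Rightarrow> ('a::field) ext \<Rightarrow> bool" where
  "support_meets D f \<longleftrightarrow> (\<forall>T. finite T \<and> f T \<noteq> 0 \<longrightarrow> T \<inter> D \<noteq> {})"

definition ext_avoiding :: "nat \<Rightarrow> ('a::field) ext \<Rightarrow> 'a ext" where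
  "ext_avoiding j m = (\<lambda>T. if j \<in> T then 0 else m T)"

definition ext_contract :: "nat \<Rightarrow> ('a::field) ext \<Rightarrow> 'a ext" where
  "ext_contract j m =
     (\<lambda>T. if j \<in> T \<or> infinite T then 0 else wsign {j} T * m (insert j T))"

lemma wsign_nonzero: "wsign A B \<noteq> (0::'a::field)"
  by (simp add: wsign_def)

lemma wsign_mult_self: "wsign A B * wsign A B = (1::'a::field)"
  by (simp add: wsign_def power_add[symmetric])

lemma wedge_ext_monomial:
  "wedge (ext_monomial D c) f S =
     (if D \<subseteq> S \<and> finite S then wsign D (S - D) * c * f (S - D) else 0)"
proof (cases "finite S")
  case True
  have "wedge (ext_monomial D c) f S =
      (\<Sum>A\<in>Pow S. if A = D then wsign D (S - D) * c * f (S - D) else 0)"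
    unfolding wedge_def ext_monomial_def by (intro sum.cong) auto
  with True show ?thesis
    by (simp add: sum.delta')
qed (simp add: wedge_def)

lemma basis_e_eq_ext_monomial: "basis_e a = ext_monomial {a} 1"
  by (simp add: basis_e_def ext_monomial_def)

lemma wedge_basis_e:
  "wedge (basis_e a) f S = (if a \<in> S \<and> finite S then wsign {a} (S - {a}) * f (S - {a}) else 0)"
  by (simp add: basis_e_eq_ext_monomial wedge_ext_monomial)

lemma wedge_basis_e_basis_e:
  assumes "a < b"
  shows "wedge (basis_e a) (basis_e b) = ext_monomial {a, b} (1::'a::field)"
proof
  fix S
  show "wedge (basis_e a) (basis_e b) S = ext_monomial {a, b} (1::'a) S"
  proof (cases "S = {a, b}")
    case True
    have "{(x, y). x \<in> {a} \<and> y \<in> {b} \<and> y < x} = {}"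
      using assms by auto
    then have sign: "wsign {a} {b} = (1::'a)"
      unfolding wsign_def by (simp only: card.empty power_0)
    have "a \<in> S" "finite S" "S - {a} = {b}"
      using assms True by auto
    then have "wedge (basis_e a) (basis_e b) S = wsign {a} {b} * (basis_e b {b} :: 'a)"
      by (simp add: wedge_basis_e)
    also have "\<dots> = ext_monomial {a, b} 1 S"
      using sign True by (simp add: basis_e_def ext_monomial_def)
    finally show ?thesis .
  next
    case False
    then have "a \<in> S \<Longrightarrow> S - {a} \<noteq> {b}"
      by auto
    with False show ?thesis
      unfolding wedge_basis_e by (auto simp: basis_e_def ext_monomial_def)
  qed
qed

lemma wedge_ext_monomial_eq_zero_iff:
  fixes c :: "'a::field"
  assumes "finite D" "c \<noteq> 0"
  shows "wedge (ext_monomial D c) f = ext_zero \<longleftrightarrow> support_meets D f"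
proof
  assume zero: "wedge (ext_monomial D c) f = ext_zero"
  show "support_meets D f"
    unfolding support_meets_def
  proof (intro allI impI; elim conjE)
    fix T assume "finite T" "f T \<noteq> 0"
    show "T \<inter> D \<noteq> {}"
    proof
      assume "T \<inter> D = {}"
      then have "(D \<union> T) - D = T" by auto
      then have "wedge (ext_monomial D c) f (D \<union> T) = wsign D T * c * f T"
        using \<open>finite T\<close> assms(1) by (simp add: wedge_ext_monomial)
      with zero \<open>f T \<noteq> 0\<close> assms(2) show False
        by (simp add: ext_zero_def wsign_nonzero)
    qed
  qed
next
  assume "support_meets D f"
  then have "f (S - D) = 0" if "finite S" for S
    using that by (auto simp: support_meets_def)
  then show "wedge (ext_monomial D c) f = ext_zero"
    unfolding ext_zero_def by (intro ext) (simp add: wedge_ext_monomial)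
qed

lemma support_meets_ext_add:
  assumes "support_meets D f" "support_meets D g"
  shows "support_meets D (ext_add f g)"
  unfolding support_meets_def
proof (intro allI impI; elim conjE)
  fix T assume "finite T" "ext_add f g T \<noteq> 0"
  then have "f T \<noteq> 0 \<or> g T \<noteq> 0"
    by (auto simp: ext_add_def)
  with \<open>finite T\<close> assms show "T \<inter> D \<noteq> {}"
    unfolding support_meets_def by blast
qed

lemma support_meets_wedge_basis_e:
  assumes "support_meets D f" "a \<notin> D"
  shows "support_meets D (wedge (basis_e a) f)"
  unfolding support_meets_def
proof (intro allI impI; elim conjE)
  fix T assume "finite T" "wedge (basis_e a) f T \<noteq> 0"
  then have "finite (T - {a})" "f (T - {a}) \<noteq> 0"
    by (auto simp: wedge_basis_e split: if_splits)
  then have "(T - {a}) \<inter> D \<noteq> {}"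
    using assms(1) by (simp add: support_meets_def)
  then show "T \<inter> D \<noteq> {}"
    by blast
qed

lemma support_meets_ext_avoiding:
  "support_meets D m \<Longrightarrow> support_meets D (ext_avoiding j m)"
  unfolding support_meets_def ext_avoiding_def by auto

lemma support_meets_ext_contract:
  assumes "support_meets D m" "j \<notin> D"
  shows "support_meets D (ext_contract j m)"
  unfolding support_meets_def
proof (intro allI impI; elim conjE)
  fix T assume "finite T" "ext_contract j m T \<noteq> 0"
  then have "finite (insert j T)" "m (insert j T) \<noteq> 0"
    by (auto simp: ext_contract_def split: if_splits)
  then have "insert j T \<inter> D \<noteq> {}"
    using assms(1) unfolding support_meets_def by blast
  with assms(2) show "T \<inter> D \<noteq> {}"
    by blast
qed

lemma support_meets_lspan:
  assumes "\<forall>u\<in>X. support_meets D u" "v \<in> lspan X"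
  shows "support_meets D v"
proof -
  obtain F c where "F \<subseteq> X" and v: "v = (\<lambda>S. \<Sum>u\<in>F. c u * u S)"
    using assms(2) by (auto simp: lspan_def)
  with assms(1) show ?thesis
    by (auto simp: support_meets_def intro!: sum.neutral)
qed

lemma ext_avoiding_in_ext_pow:
  "m \<in> ext_pow k I \<Longrightarrow> ext_avoiding j m \<in> ext_pow k (I - {j})"
  by (auto simp: ext_pow_def ext_avoiding_def)

lemma ext_contract_in_ext_pow:
  assumes "m \<in> ext_pow k I"
  shows "ext_contract j m \<in> ext_pow (k - 1) (I - {j})"
  unfolding ext_pow_def
proof (intro CollectI allI impI)
  fix T assume "ext_contract j m T \<noteq> 0"
  then have "j \<notin> T" "finite T" "m (insert j T) \<noteq> 0"
    by (auto simp: ext_contract_def split: if_splits)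
  with assms show "T \<subseteq> I - {j} \<and> card T = k - 1"
    by (auto simp: ext_pow_def)
qed

lemma ext_add_ext_avoiding_wedge_ext_contract:
  assumes "m \<in> ext_pow k I" "finite I"
  shows "ext_add (ext_avoiding j m) (wedge (basis_e j) (ext_contract j m)) = m"
proof
  fix S
  have "m S = 0" if "infinite S"
    using assms that by (auto simp: ext_pow_def dest: finite_subset)
  moreover have "insert j (S - {j}) = S" if "j \<in> S"
    using that by auto
  ultimately show "ext_add (ext_avoiding j m) (wedge (basis_e j) (ext_contract j m)) S = m S"
    by (auto simp: ext_add_def ext_avoiding_def ext_contract_def wedge_basis_e
        mult.assoc[symmetric] wsign_mult_self)
qed

lemma ext_avoiding_ext_add_wedge:
  assumes "x \<in> ext_pow k (I - {j})"
  shows "ext_avoiding j (ext_add x (wedge (basis_e j) y)) = x"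
proof
  fix T
  show "ext_avoiding j (ext_add x (wedge (basis_e j) y)) T = x T"
    using assms by (auto simp: ext_avoiding_def ext_add_def wedge_basis_e ext_pow_def)
qed

lemma ext_contract_ext_add_wedge:
  assumes "x \<in> ext_pow k (I - {j})" "y \<in> ext_pow (k - 1) (I - {j})" "finite I"
  shows "ext_contract j (ext_add x (wedge (basis_e j) y)) = y"
proof
  fix T
  have "x (insert j T) = 0"
    using assms(1) by (auto simp: ext_pow_def)
  moreover have "y T = 0" if "j \<in> T \<or> infinite T"
    using assms(2,3) that by (auto simp: ext_pow_def dest: finite_subset)
  ultimately show "ext_contract j (ext_add x (wedge (basis_e j) y)) T = y T"
    by (auto simp: ext_contract_def ext_add_def wedge_basis_e mult.assoc[symmetric]
        wsign_mult_self)
qed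

lemma decomp_eq:
  assumes "m \<in> ext_pow k {1..n}"
  shows "decomp n k j m = (ext_avoiding j m, ext_contract j m)"
  unfolding decomp_def
proof (rule the_equality)
  show "fst (ext_avoiding j m, ext_contract j m) \<in> ext_pow k ({1..n} - {j}) \<and>
      snd (ext_avoiding j m, ext_contract j m) \<in> ext_pow (k - 1) ({1..n} - {j}) \<and>
      m = ext_add (fst (ext_avoiding j m, ext_contract j m))
            (wedge (basis_e j) (snd (ext_avoiding j m, ext_contract j m)))"
    using ext_avoiding_in_ext_pow[OF assms] ext_contract_in_ext_pow[OF assms]
      ext_add_ext_avoiding_wedge_ext_contract[OF assms]
    by simp
next
  fix p :: "'a ext \<times> 'a ext"
  assume "fst p \<in> ext_pow k ({1..n} - {j}) \<and> snd p \<in> ext_pow (k - 1) ({1..n} - {j}) \<and>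
      m = ext_add (fst p) (wedge (basis_e j) (snd p))"
  then have "fst p \<in> ext_pow k ({1..n} - {j})" "snd p \<in> ext_pow (k - 1) ({1..n} - {j})"
    and m: "m = ext_add (fst p) (wedge (basis_e j) (snd p))"
    by auto
  then show "p = (ext_avoiding j m, ext_contract j m)"
    unfolding m by (simp add: ext_avoiding_ext_add_wedge ext_contract_ext_add_wedge)
qed

lemma support_meets_slow_shift:
  assumes "m \<in> ext_pow k {1..n}" "support_meets D m" "i \<notin> D" "j \<notin> D"
  shows "support_meets D (slow_shift n k j i m)"
proof -
  have x: "support_meets D (ext_avoiding j m)"
    using assms(2) by (rule support_meets_ext_avoiding)
  have y: "support_meets D (ext_contract j m)"
    using assms(2,4) by (rule support_meets_ext_contract)
  have "support_meets D (ext_add (ext_avoiding j m) (wedge (basis_e i) (ext_contract j m)))"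
    using x y assms(3) by (intro support_meets_ext_add support_meets_wedge_basis_e)
  moreover have "support_meets D (wedge (basis_e j) (ext_contract j m))"
    using y assms(4) by (rule support_meets_wedge_basis_e)
  ultimately show ?thesis
    unfolding slow_shift_def decomp_eq[OF assms(1)] prod.case by (simp only: if_split) blast
qed

theorem lemma5p2:
  fixes n k i j :: nat and L :: "('a::field) ext set"
  assumes char_not_2: "(2::'a) \<noteq> 0"
    and L_sub: "is_subspace n k L"
    and hL: "\<forall>x\<in>L. wedge (wedge (basis_e 1) (basis_e 2)) x = ext_zero"
    and hij: "3 \<le> i" "i < j" "j \<le> n"
  shows "\<forall>y\<in>slow_shift_space n k j i L.
           wedge (wedge (basis_e 1) (basis_e 2)) y = ext_zero"
proof -
  have e12: "wedge (basis_e 1) (basis_e 2) = ext_monomial {1, 2} (1::'a)"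
    by (simp add: wedge_basis_e_basis_e)
  have e12_eq_zero_iff:
    "wedge (wedge (basis_e 1) (basis_e 2)) f = ext_zero \<longleftrightarrow> support_meets {1, 2} f" for f :: "'a ext"
    unfolding e12 by (rule wedge_ext_monomial_eq_zero_iff) simp_all
  have "L \<subseteq> ext_pow k {1..n}"
    using L_sub by (simp add: is_subspace_def)
  moreover have "support_meets {1, 2} m" if "m \<in> L" for m
    using hL that e12_eq_zero_iff by blast
  moreover have "i \<notin> {1, 2}" "j \<notin> {1, 2}"
    using hij by auto
  ultimately have shifted: "support_meets {1, 2} (slow_shift n k j i m)" if "m \<in> L" for m
    using that by (blast intro: support_meets_slow_shift)
  show ?thesis
  proof
    fix y assume "y \<in> slow_shift_space n k j i L"
    then have "support_meets {1, 2} y"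
      unfolding slow_shift_space_def by (rule support_meets_lspan[rotated]) (use shifted in blast)
    then show "wedge (wedge (basis_e 1) (basis_e 2)) y = ext_zero"
      using e12_eq_zero_iff by blast
  qed
qed

end
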